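(* Any finite product of matrices from the set $\{A_{(0,0)},A_{(1,0)},A_{(0,1)},A_{(1,1)}\}$ has at most one row all of whose entries are zero.
   Context: $A_{(0,0)}=\begin{pmatrix}3&1&1&1\\0&1&0&0\\0&0&1&0\\0&0&0&1\end{pmatrix}$, $A_{(1,0)}=\begin{pmatrix}1&0&1&0\\1&3&0&1\\0&0&0&0\\0&0&1&1\end{pmatrix}$, $A_{(0,1)}=\begin{pmatrix}1&1&0&0\\0&0&0&0\\1&0&3&1\\0&1&0&1\end{pmatrix}$, $A_{(1,1)}=\begin{pmatrix}1&0&0&0\\0&1&0&0\\0&0&1&0\\1&1&1&3\end{pmatrix}$. *)

theory Defs
  imports "Jordan_Normal_Form.Matrix"
begin

definition A00 :: "int mat" where
  "A00 = mat_of_rows_list 4 [[3,1,1,1],[0,1,0,0],[0,0,1,0],[0,0,0,1]]"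
definition A10 :: "int mat" where
  "A10 = mat_of_rows_list 4 [[1,0,1,0],[1,3,0,1],[0,0,0,0],[0,0,1,1]]"
definition A01 :: "int mat" where
  "A01 = mat_of_rows_list 4 [[1,1,0,0],[0,0,0,0],[1,0,3,1],[0,1,0,1]]"
definition A11 :: "int mat" where
  "A11 = mat_of_rows_list 4 [[1,0,0,0],[0,1,0,0],[0,0,1,0],[1,1,1,3]]"

definition prod_mats :: "int mat list \<Rightarrow> int mat" where
  "prod_mats Ms = foldr (*) Ms (1\<^sub>m 4)"

definition zero_rows :: "int mat \<Rightarrow> nat set" where
  "zero_rows M = {i. i < dim_row M \<and> (\<forall>j < dim_col M. M $$ (i, j) = 0)}"

end

theory Submission
  imports Defs
begin

text \<open>For entrywise nonnegative matrices, row \<open>i\<close> of \<open>M * Q\<close> vanishes exactly when every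
  column in the support of row \<open>i\<close> of \<open>M\<close> indexes a zero row of \<open>Q\<close>. If \<open>Q\<close> has at most one
  zero row, say inside \<open>{k}\<close>, the zero rows of \<open>M * Q\<close> are therefore among the rows of \<open>M\<close>
  supported in column \<open>k\<close> alone. Each generator has at most one such row for every \<open>k\<close>:
  for \<open>A00\<close> and \<open>A11\<close> only row \<open>k\<close> can qualify, for \<open>A10\<close> and \<open>A01\<close> only their zero
  row.\<close>

definition nonneg_mat :: "int mat \<Rightarrow> bool" where
  "nonneg_mat M \<longleftrightarrow> (\<forall>i<dim_row M. \<forall>j<dim_col M. 0 \<le> M $$ (i, j))"

definition rows_supported_in :: "int mat \<Rightarrow> nat set \<Rightarrow> nat set" where
  "rows_supported_in M K =
     {i. i < dim_row M \<and> (\<forall>j<dim_col M. M $$ (i, j) \<noteq> 0 \<longrightarrow> j \<in> K)}"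

lemma rows_supported_in_mono: "K \<subseteq> L \<Longrightarrow> rows_supported_in M K \<subseteq> rows_supported_in M L"
  unfolding rows_supported_in_def by blast

lemma finite_rows_supported_in: "finite (rows_supported_in M K)"
  unfolding rows_supported_in_def by simp

lemma finite_zero_rows: "finite (zero_rows M)"
  unfolding zero_rows_def by simp

lemma nonneg_mat_one: "nonneg_mat (1\<^sub>m n)"
  unfolding nonneg_mat_def by simp

lemma zero_rows_one: "zero_rows (1\<^sub>m n) = {}"
  unfolding zero_rows_def by auto

lemma nonneg_mat_mult:
  assumes "nonneg_mat M" "nonneg_mat Q" "dim_col M = dim_row Q"
  shows "nonneg_mat (M * Q)"
  using assms unfolding nonneg_mat_def
  by (auto simp: scalar_prod_def intro!: sum_nonneg)

lemma zero_rows_mult: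
  assumes "nonneg_mat M" "nonneg_mat Q" "dim_col M = dim_row Q"
  shows "zero_rows (M * Q) = rows_supported_in M (zero_rows Q)"
proof -
  have entry_eq_0: "(M * Q) $$ (i, j) = 0 \<longleftrightarrow> (\<forall>k<dim_col M. M $$ (i, k) = 0 \<or> Q $$ (k, j) = 0)"
    if "i < dim_row M" "j < dim_col Q" for i j
  proof -
    have "(M * Q) $$ (i, j) = (\<Sum>k<dim_col M. M $$ (i, k) * Q $$ (k, j))"
      using that assms(3) by (simp add: scalar_prod_def lessThan_atLeast0)
    also have "\<dots> = 0 \<longleftrightarrow> (\<forall>k<dim_col M. M $$ (i, k) * Q $$ (k, j) = 0)"
      using assms that by (subst sum_nonneg_eq_0_iff) (auto simp: nonneg_mat_def)
    finally show ?thesis by simp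
  qed
  have "dim_row (M * Q) = dim_row M" "dim_col (M * Q) = dim_col Q"
    by simp_all
  then show ?thesis
    unfolding zero_rows_def rows_supported_in_def
    using assms(3) by (auto simp del: index_mult_mat simp: entry_eq_0) blast+
qed

lemma card_zero_rows_mult_le_1:
  assumes "nonneg_mat M" "nonneg_mat Q" "dim_col M = dim_row Q"
    and "\<And>k. card (rows_supported_in M {k}) \<le> 1"
    and "card (zero_rows Q) \<le> 1"
  shows "card (zero_rows (M * Q)) \<le> 1"
proof -
  obtain k where "zero_rows Q \<subseteq> {k}"
  proof (cases "zero_rows Q = {}")
    case False
    then obtain k where "k \<in> zero_rows Q"
      by blast
    then show ?thesis
      using that assms(5) finite_zero_rows[of Q] by (auto simp: card_le_Suc0_iff_eq)
  qed blast
  then have "zero_rows (M * Q) \<subseteq> rows_supported_in M {k}"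
    using zero_rows_mult[OF assms(1-3)] rows_supported_in_mono by blast
  then show ?thesis
    using assms(4) card_mono[OF finite_rows_supported_in] le_trans by blast
qed

lemma dim_generators:
  "dim_row A00 = 4" "dim_row A10 = 4" "dim_row A01 = 4" "dim_row A11 = 4"
  "dim_col A00 = 4" "dim_col A10 = 4" "dim_col A01 = 4" "dim_col A11 = 4"
  by (simp_all add: A00_def A10_def A01_def A11_def mat_of_rows_list_def)

lemma index_generators:
  "i < 4 \<Longrightarrow> j < 4 \<Longrightarrow> A00 $$ (i, j) = [[3,1,1,1],[0,1,0,0],[0,0,1,0],[0,0,0,1]] ! i ! j"
  "i < 4 \<Longrightarrow> j < 4 \<Longrightarrow> A10 $$ (i, j) = [[1,0,1,0],[1,3,0,1],[0,0,0,0],[0,0,1,1]] ! i ! j"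
  "i < 4 \<Longrightarrow> j < 4 \<Longrightarrow> A01 $$ (i, j) = [[1,1,0,0],[0,0,0,0],[1,0,3,1],[0,1,0,1]] ! i ! j"
  "i < 4 \<Longrightarrow> j < 4 \<Longrightarrow> A11 $$ (i, j) = [[1,0,0,0],[0,1,0,0],[0,0,1,0],[1,1,1,3]] ! i ! j"
  by (auto simp: A00_def A10_def A01_def A11_def mat_of_rows_list_def)

lemma all_less_4: "(\<forall>j<4. P (j::nat)) \<longleftrightarrow> P 0 \<and> P 1 \<and> P 2 \<and> P 3"
  by (auto simp: numeral_eq_Suc less_Suc_eq)

lemma less_4_cases: "(i::nat) < 4 \<longleftrightarrow> i = 0 \<or> i = 1 \<or> i = 2 \<or> i = 3"
  by auto

lemma nonneg_mat_generators:
  "nonneg_mat A00" "nonneg_mat A10" "nonneg_mat A01" "nonneg_mat A11"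
  unfolding nonneg_mat_def by (simp_all add: dim_generators index_generators all_less_4)

lemma rows_supported_in_generators:
  "rows_supported_in A00 {k} \<subseteq> {k}" "rows_supported_in A11 {k} \<subseteq> {k}"
  "rows_supported_in A10 {k} \<subseteq> {2}" "rows_supported_in A01 {k} \<subseteq> {1}"
  unfolding rows_supported_in_def dim_generators
  by (rule subsetI, clarify, drule less_4_cases[THEN iffD1], elim disjE;
      simp add: index_generators all_less_4)+

lemma card_rows_supported_in_generator:
  assumes "M \<in> {A00, A10, A01, A11}"
  shows "card (rows_supported_in M {k}) \<le> 1"
proof -
  obtain r where "rows_supported_in M {k} \<subseteq> {r}"
    using assms rows_supported_in_generators by blast
  then show ?thesis
    using card_mono[of "{r}"] by fastforce
qed

lemma prod_mats_Cons: "prod_mats (M # Ms) = M * prod_mats Ms"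
  unfolding prod_mats_def by simp

lemma prod_mats_generators:
  assumes "set Ms \<subseteq> {A00, A10, A01, A11}"
  shows "prod_mats Ms \<in> carrier_mat 4 4 \<and> nonneg_mat (prod_mats Ms)"
  using assms
proof (induction Ms)
  case Nil
  show ?case
    by (simp add: prod_mats_def nonneg_mat_one)
next
  case (Cons M Ms)
  then have "M \<in> carrier_mat 4 4" "nonneg_mat M"
    by (auto simp: dim_generators nonneg_mat_generators)
  with Cons show ?case
    by (auto simp: prod_mats_Cons intro!: nonneg_mat_mult)
qed

theorem lemma7p2:
  fixes Ms :: "int mat list"
  assumes "set Ms \<subseteq> {A00, A10, A01, A11}"
  shows "card (zero_rows (prod_mats Ms)) \<le> 1"
  using assms
proof (induction Ms)
  case Nil
  show ?case by (simp add: prod_mats_def zero_rows_one)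
next
  case (Cons M Ms)
  then have M: "M \<in> {A00, A10, A01, A11}" and Ms: "set Ms \<subseteq> {A00, A10, A01, A11}"
    by simp_all
  have Q: "prod_mats Ms \<in> carrier_mat 4 4" "nonneg_mat (prod_mats Ms)"
    using prod_mats_generators[OF Ms] by simp_all
  have "nonneg_mat M" "dim_col M = dim_row (prod_mats Ms)"
    using M Q(1) by (auto simp: dim_generators nonneg_mat_generators)
  show ?case
    unfolding prod_mats_Cons
    by (rule card_zero_rows_mult_le_1[OF \<open>nonneg_mat M\<close> Q(2)
          \<open>dim_col M = dim_row (prod_mats Ms)\<close> card_rows_supported_in_generator[OF M] Cons.IH[OF Ms]])
qed

end
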